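(* There is an absolute constant $K>0$ such that the following holds. Let $n\ge1$, $k=\lfloor\sqrt n\rfloor$, and let $M_n$ be the $\binom{n}{k}\times n$ matrix whose rows are all distinct $0/1$ vectors of length $n$ with exactly $k$ ones. Let $R$ be a row player's payoff matrix (entries in $[0,1]$) that contains $M_n$ as a submatrix (on some set $S$ of rows and some set $T$ of columns), such that every row of $R$ not in $S$ is identically $0$, and for every row in $S$, every entry in a column not in $T$ equals $1$. Let $p,p_r,p_c\in[0,1]$. Then for every mixed strategy $\mathbf{x}$ of the row player allocating probability at least $p_r$ to rows not in $S$, there exists a column $\ell\in T$ such that for every mixed strategy $\mathbf{y}$ of the column player that allocates probability at least $p_c$ to columns not in $T$ and probability $p$ to column $\ell$, the row player's regret $\max_i\mathbf{e}_i^TR\mathbf{y}-\mathbf{x}^TR\mathbf{y}$ is at least $p-K/\sqrt n+p_rp_c$.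
   Context: Mixed strategies are probability vectors over rows/columns; $\mathbf{e}_i$ is the $i$-th unit vector; the row player's payoff is $\mathbf{x}^TR\mathbf{y}$ and his regret is the payoff of his best response to $\mathbf{y}$ minus $\mathbf{x}^TR\mathbf{y}$. *)

theory Defs
  imports Complex_Main
begin

definition mixed_strategy :: "nat \<Rightarrow> (nat \<Rightarrow> real) \<Rightarrow> bool" where
  "mixed_strategy m x \<longleftrightarrow> (\<forall>i<m. x i \<ge> 0) \<and> (\<Sum>i<m. x i) = 1"

definition row_payoff :: "nat \<Rightarrow> nat \<Rightarrow> (nat \<Rightarrow> nat \<Rightarrow> real) \<Rightarrow> (nat \<Rightarrow> real) \<Rightarrow> (nat \<Rightarrow> real) \<Rightarrow> real" where
  "row_payoff m N R x y = (\<Sum>i<m. \<Sum>j<N. x i * R i j * y j)"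

definition row_regret :: "nat \<Rightarrow> nat \<Rightarrow> (nat \<Rightarrow> nat \<Rightarrow> real) \<Rightarrow> (nat \<Rightarrow> real) \<Rightarrow> (nat \<Rightarrow> real) \<Rightarrow> real" where
  "row_regret m N R x y = Max ((\<lambda>i. \<Sum>j<N. R i j * y j) ` {..<m}) - row_payoff m N R x y"

text \<open>R contains M_n (all 0/1 rows with exactly k ones, each exactly once) as the submatrix
  on rows S and columns T, up to ordering of rows and columns.\<close>
definition contains_Mn :: "nat \<Rightarrow> nat \<Rightarrow> (nat \<Rightarrow> nat \<Rightarrow> real) \<Rightarrow> nat set \<Rightarrow> nat set \<Rightarrow> bool" where
  "contains_Mn n k R S T \<longleftrightarrow> card T = n \<and>
     (\<forall>i\<in>S. \<forall>j\<in>T. R i j = 0 \<or> R i j = 1) \<and>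
     bij_betw (\<lambda>i. {j\<in>T. R i j = 1}) S {A. A \<subseteq> T \<and> card A = k}"

end

theory Submission
  imports Defs
begin

text \<open>Choose a column \<open>l\<close> of \<open>T\<close> that the rows of \<open>S\<close> used by \<open>x\<close> rarely hit: each row of
  \<open>M\<^sub>n\<close> has \<open>k\<close> ones among \<open>n\<close> columns, so on average a column carries at most a \<open>k/n\<close>
  fraction of the mass of \<open>x\<close>. Against any \<open>y\<close> with \<open>y l = p\<close>, every row of \<open>S\<close> avoiding \<open>l\<close>
  can be improved by about \<open>p\<close>: swap its least \<open>y\<close>-weighted column, of weight at most
  \<open>1/k\<close>, for \<open>l\<close>. The zero rows outside \<open>S\<close> lose against a row through \<open>l\<close> at least the
  mass \<open>y\<close> puts outside \<open>T\<close> plus \<open>p\<close>. Hence the regret is at least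
  \<open>p - k/n - 1/k + p\<^sub>r p\<^sub>c\<close>, and \<open>k = \<lfloor>\<surd>n\<rfloor>\<close> makes \<open>k/n + 1/k \<le> 3/\<surd>n\<close>.\<close>

lemma exists_le_average:
  fixes w :: "'a \<Rightarrow> real"
  assumes "finite A" "A \<noteq> {}"
  shows "\<exists>a\<in>A. real (card A) * w a \<le> sum w A"
proof -
  have "Min (w ` A) \<in> w ` A" using assms by (intro Min_in) auto
  then obtain a where a: "a \<in> A" "w a = Min (w ` A)" by (metis imageE)
  then have "\<forall>b\<in>A. w a \<le> w b" using assms by simp
  then show ?thesis using a(1) sum_bounded_below[of A "w a" w] by auto
qed

lemma exists_swap_above_average:
  fixes y :: "'a \<Rightarrow> real"
  assumes "finite A" "A \<noteq> {}" "l \<notin> A"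
  shows "\<exists>a\<in>A. sum y A + y l - sum y A / card A \<le> sum y (insert l (A - {a}))"
proof -
  obtain a where a: "a \<in> A" "real (card A) * y a \<le> sum y A"
    using exists_le_average[OF assms(1,2)] by blast
  have "0 < card A" using assms(1,2) card_gt_0_iff by blast
  then have "y a \<le> sum y A / card A"
    using a(2) by (simp add: pos_le_divide_eq mult.commute)
  moreover have "sum y (insert l (A - {a})) = y l + (sum y A - y a)"
    using assms(1,3) a(1) by (simp add: sum_diff1)
  ultimately show ?thesis using a(1) by force
qed

lemma row_regret_ge:
  assumes x: "mixed_strategy m x"
    and d: "\<And>i. i < m \<Longrightarrow> (\<Sum>j<N. R i j * y j) + d i \<le> Max ((\<lambda>i. \<Sum>j<N. R i j * y j) ` {..<m})"
  shows "(\<Sum>i<m. x i * d i) \<le> row_regret m N R x y"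
proof -
  let ?v = "\<lambda>i. \<Sum>j<N. R i j * y j"
  let ?M = "Max (?v ` {..<m})"
  have "(\<Sum>i<m. x i * d i) \<le> (\<Sum>i<m. x i * (?M - ?v i))"
    using x d by (intro sum_mono mult_left_mono) (auto simp: mixed_strategy_def algebra_simps)
  also have "\<dots> = ?M - (\<Sum>i<m. x i * ?v i)"
    using x by (simp add: mixed_strategy_def right_diff_distrib sum_subtractf
        sum_distrib_right[symmetric])
  also have "(\<Sum>i<m. x i * ?v i) = row_payoff m N R x y"
    unfolding row_payoff_def by (simp add: sum_distrib_left mult.assoc)
  finally show ?thesis unfolding row_regret_def .
qed

lemma floor_sqrt_bounds:
  fixes n :: nat
  defines "k \<equiv> nat \<lfloor>sqrt (real n)\<rfloor>"
  assumes "1 \<le> n"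
  shows "1 \<le> k" "k \<le> n" "real k / real n + 1 / real k \<le> 3 / sqrt (real n)"
proof -
  let ?s = "sqrt (real n)"
  have s1: "1 \<le> ?s" using assms by simp
  have k: "real k = of_int \<lfloor>?s\<rfloor>" using s1 by (simp add: k_def)
  have k_le: "real k \<le> ?s" using k of_int_floor_le by metis
  have k_gt: "?s < real k + 1" using k real_of_int_floor_add_one_gt by metis
  show k1: "1 \<le> k" using k_gt s1 by linarith
  have "?s \<le> real n" using mult_right_mono[OF s1, of ?s] by simp
  then show "k \<le> n" using k_le by linarith
  have "real k * ?s \<le> real n"
    using mult_right_mono[OF k_le, of ?s] s1 by simp
  then have "real k / real n \<le> 1 / ?s" using s1 assms(2) by (simp add: field_simps)
  moreover have "1 / real k \<le> 2 / ?s"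
  proof -
    have "?s \<le> 2 * real k" using k_gt k1 by simp
    then have "2 / (2 * real k) \<le> 2 / ?s" using s1 k1 by (intro divide_left_mono) auto
    then show ?thesis by simp
  qed
  ultimately show "real k / real n + 1 / real k \<le> 3 / ?s" by simp
qed

locale Mn_game =
  fixes n k m N :: nat and R :: "nat \<Rightarrow> nat \<Rightarrow> real" and S T :: "nat set"
  assumes k_pos: "1 \<le> k" and k_le_n: "k \<le> n"
    and S_rows: "S \<subseteq> {..<m}" and T_cols: "T \<subseteq> {..<N}"
    and Mn: "contains_Mn n k R S T"
    and rows_outside_S: "\<forall>i\<in>{..<m} - S. \<forall>j<N. R i j = 0"
    and cols_outside_T: "\<forall>i\<in>S. \<forall>j\<in>{..<N} - T. R i j = 1"
begin

definition ones :: "nat \<Rightarrow> nat set" where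
  "ones i = {j \<in> T. R i j = 1}"

definition column_mass :: "(nat \<Rightarrow> real) \<Rightarrow> nat \<Rightarrow> real" where
  "column_mass x l = sum x {i \<in> S. l \<in> ones i}"

lemma finite_S: "finite S"
  using S_rows finite_subset by blast

lemma finite_T: "finite T"
  using T_cols finite_subset by blast

lemma card_T: "card T = n"
  using Mn by (simp add: contains_Mn_def)

lemma ones_subset: "ones i \<subseteq> T"
  by (auto simp: ones_def)

lemma card_ones: "i \<in> S \<Longrightarrow> card (ones i) = k"
  using Mn by (auto simp: contains_Mn_def bij_betw_def ones_def)

lemma ones_onto:
  assumes "A \<subseteq> T" "card A = k"
  shows "\<exists>i\<in>S. ones i = A"
proof -
  have "A \<in> ones ` S"
    using Mn assms by (simp add: contains_Mn_def bij_betw_def ones_def[abs_def])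
  then show ?thesis by blast
qed

lemma S_nonempty: "S \<noteq> {}"
  using obtain_subset_with_card_n[of k T] k_le_n card_T ones_onto by (metis empty_iff)

lemma row_value_in_S:
  assumes "i \<in> S"
  shows "(\<Sum>j<N. R i j * y j) = (\<Sum>j\<in>{..<N} - T. y j) + sum y (ones i)"
proof -
  have "(\<Sum>j<N. R i j * y j) = (\<Sum>j\<in>{..<N} - T. R i j * y j) + (\<Sum>j\<in>T. R i j * y j)"
    using sum.subset_diff[OF T_cols] by simp
  also have "(\<Sum>j\<in>{..<N} - T. R i j * y j) = (\<Sum>j\<in>{..<N} - T. y j)"
    using cols_outside_T assms by simp
  also have "(\<Sum>j\<in>T. R i j * y j) = (\<Sum>j\<in>T. if R i j = 1 then y j else 0)"
    using Mn assms by (intro sum.cong) (auto simp: contains_Mn_def)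
  also have "\<dots> = sum y (ones i)"
    using finite_T by (simp add: ones_def sum.inter_filter)
  finally show ?thesis .
qed

lemma row_value_outside_S: "i \<in> {..<m} - S \<Longrightarrow> (\<Sum>j<N. R i j * y j) = 0"
  using rows_outside_S by simp

lemma sum_column_mass: "(\<Sum>l\<in>T. column_mass x l) = real k * sum x S"
proof -
  have "(\<Sum>l\<in>T. column_mass x l) = (\<Sum>i\<in>S. \<Sum>l\<in>{l \<in> T. l \<in> ones i}. x i)"
    unfolding column_mass_def by (rule sum.swap_restrict[OF finite_S finite_T, symmetric])
  also have "\<dots> = (\<Sum>i\<in>S. real k * x i)"
  proof (intro sum.cong refl)
    fix i assume "i \<in> S"
    moreover have "{l \<in> T. l \<in> ones i} = ones i" using ones_subset by blast
    ultimately show "(\<Sum>l\<in>{l \<in> T. l \<in> ones i}. x i) = real k * x i" by (simp add: card_ones)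
  qed
  finally show ?thesis by (simp add: sum_distrib_left)
qed

lemma exists_light_column:
  assumes "\<forall>i\<in>S. 0 \<le> x i" "sum x S \<le> 1"
  shows "\<exists>l\<in>T. column_mass x l \<le> real k / real n"
proof -
  have "T \<noteq> {}" using card_T k_pos k_le_n by auto
  then obtain l where l: "l \<in> T" "real n * column_mass x l \<le> real k * sum x S"
    using exists_le_average[OF finite_T] card_T sum_column_mass by metis
  have "real k * sum x S \<le> real k" using assms by (simp add: mult_left_le)
  moreover have "0 < real n" using k_pos k_le_n by simp
  ultimately have "column_mass x l \<le> real k / real n"
    using l(2) by (simp add: pos_le_divide_eq mult.commute)
  then show ?thesis using l(1) by blast
qed

lemma exists_better_row_through:
  assumes i: "i \<in> S" and l: "l \<in> T" "l \<notin> ones i"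
    and y: "sum y (ones i) \<le> 1"
  shows "\<exists>i'\<in>S. l \<in> ones i' \<and> sum y (ones i) + y l - 1 / real k \<le> sum y (ones i')"
proof -
  have fin: "finite (ones i)" using finite_T ones_subset finite_subset by blast
  have ne: "ones i \<noteq> {}" using card_ones[OF i] k_pos by auto
  obtain a where a: "a \<in> ones i"
    and better: "sum y (ones i) + y l - sum y (ones i) / k \<le> sum y (insert l (ones i - {a}))"
    using exists_swap_above_average[OF fin ne l(2)] card_ones[OF i] by metis
  have "insert l (ones i - {a}) \<subseteq> T" using l ones_subset by auto
  moreover have "card (insert l (ones i - {a})) = k"
    using fin a l(2) card_ones[OF i] k_pos by simp
  ultimately obtain i' where "i' \<in> S" "ones i' = insert l (ones i - {a})"
    using ones_onto by blast
  moreover have "sum y (ones i) / k \<le> 1 / k" using y by (simp add: divide_right_mono)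
  ultimately show ?thesis using better by force
qed

text \<open>A lower bound on how much the best response to \<open>y\<close> beats row \<open>i\<close>, when \<open>l\<close> is the
  column that rows of \<open>S\<close> are swapped into.\<close>

definition swap_gain :: "(nat \<Rightarrow> real) \<Rightarrow> nat \<Rightarrow> nat \<Rightarrow> real" where
  "swap_gain y l i =
    (if i \<in> S then if l \<in> ones i then 0 else y l - 1 / real k
     else (\<Sum>j\<in>{..<N} - T. y j) + y l)"

lemma row_value_plus_swap_gain_le_Max:
  assumes y: "mixed_strategy N y" and l: "l \<in> T" and i: "i < m"
  shows "(\<Sum>j<N. R i j * y j) + swap_gain y l i \<le> Max ((\<lambda>i. \<Sum>j<N. R i j * y j) ` {..<m})"
proof -
  let ?v = "\<lambda>i. \<Sum>j<N. R i j * y j"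
  let ?M = "Max (?v ` {..<m})"
  have sum_ones_le_1: "sum y (ones i) \<le> 1" for i
  proof -
    have "sum y (ones i) \<le> (\<Sum>j<N. y j)"
      using y ones_subset[of i] T_cols by (intro sum_mono2) (auto simp: mixed_strategy_def)
    then show ?thesis using y by (simp add: mixed_strategy_def)
  qed
  have v_le_M: "?v i \<le> ?M" if "i \<in> S" for i
    using that S_rows by auto
  have through_l: "\<exists>i'\<in>S. l \<in> ones i' \<and> ?v i + swap_gain y l i \<le> ?v i'" if "i \<in> S" for i
  proof (cases "l \<in> ones i")
    case False
    then show ?thesis
      using exists_better_row_through[OF that l False sum_ones_le_1] that
      by (auto simp: swap_gain_def row_value_in_S)
  qed (use that in \<open>auto simp: swap_gain_def\<close>)
  show ?thesis
  proof (cases "i \<in> S")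
    case True
    then show ?thesis using through_l v_le_M by fastforce
  next
    case False
    obtain i' where i': "i' \<in> S" "l \<in> ones i'"
      using through_l S_nonempty by blast
    have "y l \<le> sum y (ones i')"
      using i' finite_T ones_subset[of i'] y T_cols
      by (intro member_le_sum) (auto intro: finite_subset simp: mixed_strategy_def)
    then show ?thesis
      using v_le_M[OF i'(1)] row_value_in_S[OF i'(1)] row_value_outside_S[of i] i False
      by (simp add: swap_gain_def)
  qed
qed

lemma sum_swap_gain:
  "(\<Sum>i<m. x i * swap_gain y l i)
    = (\<Sum>i\<in>{..<m} - S. x i) * ((\<Sum>j\<in>{..<N} - T. y j) + y l)
      + (y l - 1 / real k) * (sum x S - column_mass x l)"
proof -
  have S_split: "sum x S = column_mass x l + sum x {i \<in> S. l \<notin> ones i}"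
    using sum.Int_Diff[OF finite_S, of x "{i. l \<in> ones i}"]
    by (simp add: column_mass_def Int_def set_diff_eq)
  have "(\<Sum>i<m. x i * swap_gain y l i)
      = (\<Sum>i\<in>{..<m} - S. x i * swap_gain y l i) + (\<Sum>i\<in>S. x i * swap_gain y l i)"
    using sum.subset_diff[OF S_rows] by simp
  also have "(\<Sum>i\<in>{..<m} - S. x i * swap_gain y l i)
      = (\<Sum>i\<in>{..<m} - S. x i) * ((\<Sum>j\<in>{..<N} - T. y j) + y l)"
    by (simp add: swap_gain_def sum_distrib_right)
  also have "(\<Sum>i\<in>S. x i * swap_gain y l i)
      = (\<Sum>i\<in>S. if l \<notin> ones i then (y l - 1 / real k) * x i else 0)"
    by (intro sum.cong) (auto simp: swap_gain_def)
  also have "\<dots> = (y l - 1 / real k) * sum x {i \<in> S. l \<notin> ones i}"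
    by (simp add: sum.inter_filter[OF finite_S, symmetric] sum_distrib_left)
  finally show ?thesis using S_split by simp
qed

theorem exists_column_regret_ge:
  assumes x: "mixed_strategy m x" and pr: "0 \<le> pr" "pr \<le> (\<Sum>i\<in>{..<m} - S. x i)"
    and p: "0 \<le> p" "p \<le> 1" and pc: "0 \<le> pc"
  shows "\<exists>l\<in>T. \<forall>y. mixed_strategy N y \<and> (\<Sum>j\<in>{..<N} - T. y j) \<ge> pc \<and> y l = p
    \<longrightarrow> row_regret m N R x y \<ge> p - real k / real n - 1 / real k + pr * pc"
proof -
  define s where "s = (\<Sum>i\<in>{..<m} - S. x i)"
  have x_nonneg: "\<forall>i\<in>S. 0 \<le> x i" using x S_rows by (auto simp: mixed_strategy_def)
  have s_plus_S: "s + sum x S = 1"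
    using x sum.subset_diff[OF S_rows, of x] by (simp add: mixed_strategy_def s_def)
  have s_nonneg: "0 \<le> s" using pr s_def by linarith
  obtain l where l: "l \<in> T" and light: "column_mass x l \<le> real k / real n"
    using exists_light_column[OF x_nonneg] s_plus_S s_nonneg by auto
  have mass_l: "0 \<le> column_mass x l" "column_mass x l \<le> sum x S"
    unfolding column_mass_def using x_nonneg finite_S by (auto intro: sum_nonneg sum_mono2)
  show ?thesis
  proof (intro bexI[OF _ l] allI impI)
    fix y assume y: "mixed_strategy N y \<and> (\<Sum>j\<in>{..<N} - T. y j) \<ge> pc \<and> y l = p"
    define q where "q = (\<Sum>j\<in>{..<N} - T. y j)"
    define c where "c = sum x S - column_mass x l"
    have "pr * pc \<le> s * q" using y pr pc by (intro mult_mono) (auto simp: s_def q_def)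
    moreover have "(1 / real k) * c \<le> 1 / real k"
      using mass_l s_plus_S s_nonneg by (intro mult_left_le) (auto simp: c_def)
    moreover have "p * column_mass x l \<le> column_mass x l"
      using mass_l p by (simp add: mult_left_le_one_le)
    moreover have "s * (q + p) + (p - 1 / real k) * c
        = s * q + p * (s + sum x S) - p * column_mass x l - (1 / real k) * c"
      by (simp add: c_def algebra_simps)
    ultimately have "p - real k / real n - 1 / real k + pr * pc \<le> s * (q + p) + (p - 1 / real k) * c"
      using light s_plus_S by simp
    also have "\<dots> = (\<Sum>i<m. x i * swap_gain y l i)"
      using y by (simp add: sum_swap_gain s_def q_def c_def)
    also have "\<dots> \<le> row_regret m N R x y"
      using row_value_plus_swap_gain_le_Max[OF _ l] y by (intro row_regret_ge[OF x]) auto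
    finally show "row_regret m N R x y \<ge> p - real k / real n - 1 / real k + pr * pc" .
  qed
qed

end

theorem corollary1:
  shows "\<exists>K>0. \<forall>(n::nat) (m::nat) (N::nat) (R::nat \<Rightarrow> nat \<Rightarrow> real) (S::nat set) (T::nat set)
           (p::real) (pr::real) (pc::real) (x::nat \<Rightarrow> real).
     n \<ge> 1 \<and> S \<subseteq> {..<m} \<and> T \<subseteq> {..<N} \<and>
     (\<forall>i<m. \<forall>j<N. 0 \<le> R i j \<and> R i j \<le> 1) \<and>
     contains_Mn n (nat \<lfloor>sqrt (real n)\<rfloor>) R S T \<and>
     (\<forall>i\<in>{..<m} - S. \<forall>j<N. R i j = 0) \<and>
     (\<forall>i\<in>S. \<forall>j\<in>{..<N} - T. R i j = 1) \<and>
     0 \<le> p \<and> p \<le> 1 \<and> 0 \<le> pr \<and> pr \<le> 1 \<and> 0 \<le> pc \<and> pc \<le> 1 \<and>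
     mixed_strategy m x \<and> (\<Sum>i\<in>{..<m} - S. x i) \<ge> pr
     \<longrightarrow> (\<exists>l\<in>T. \<forall>y. mixed_strategy N y \<and> (\<Sum>j\<in>{..<N} - T. y j) \<ge> pc \<and> y l = p
            \<longrightarrow> row_regret m N R x y \<ge> p - K / sqrt (real n) + pr * pc)"
proof (intro exI[of _ 3] conjI allI impI)
  fix n m N :: nat and R :: "nat \<Rightarrow> nat \<Rightarrow> real" and S T :: "nat set"
    and p pr pc :: real and x :: "nat \<Rightarrow> real"
  let ?k = "nat \<lfloor>sqrt (real n)\<rfloor>"
  assume H: "n \<ge> 1 \<and> S \<subseteq> {..<m} \<and> T \<subseteq> {..<N} \<and>
     (\<forall>i<m. \<forall>j<N. 0 \<le> R i j \<and> R i j \<le> 1) \<and>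
     contains_Mn n ?k R S T \<and>
     (\<forall>i\<in>{..<m} - S. \<forall>j<N. R i j = 0) \<and>
     (\<forall>i\<in>S. \<forall>j\<in>{..<N} - T. R i j = 1) \<and>
     0 \<le> p \<and> p \<le> 1 \<and> 0 \<le> pr \<and> pr \<le> 1 \<and> 0 \<le> pc \<and> pc \<le> 1 \<and>
     mixed_strategy m x \<and> (\<Sum>i\<in>{..<m} - S. x i) \<ge> pr"
  then have k: "1 \<le> ?k" "?k \<le> n" "real ?k / real n + 1 / real ?k \<le> 3 / sqrt (real n)"
    using floor_sqrt_bounds by auto
  interpret Mn_game n ?k m N R S T
    by unfold_locales (use H k in auto)
  obtain l where "l \<in> T" and l: "\<And>y. mixed_strategy N y \<and> (\<Sum>j\<in>{..<N} - T. y j) \<ge> pc \<and> y l = p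
      \<Longrightarrow> row_regret m N R x y \<ge> p - real ?k / real n - 1 / real ?k + pr * pc"
    using exists_column_regret_ge[of x pr p pc] H by blast
  then show "\<exists>l\<in>T. \<forall>y. mixed_strategy N y \<and> (\<Sum>j\<in>{..<N} - T. y j) \<ge> pc \<and> y l = p
            \<longrightarrow> row_regret m N R x y \<ge> p - 3 / sqrt (real n) + pr * pc"
    using k(3) by fastforce
qed simp

end
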